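(* Let $\hbar,m_0,c>0$, put $E_0=m_0c^2$ and $l_0=\frac{\hbar}{m_0c}$. Let $f_n\in\mathbb{C}$ be arbitrary constants, indexed by the positive integers $n$ with $n l_0<1$, and define for $x,t\in\mathbb{R}$ $$ Y(x,t)=\exp\left(-\frac{iE_0t}{\hbar}\right)\sum_{\substack{n\geq 1\\ n l_0<1}}f_n\exp\left(i\frac{E_0l_0^2n^2 t}{2\hbar\sqrt{\left|l_0^2n^2-1\right|}}\right)e^{-nx}. $$ Then $Y$ satisfies $$ i\hbar\frac{\partial Y}{\partial t}=E_0Y+\frac{E_0}{2}\sum^{\infty}_{n=0}(-1)^{n+1}\binom{-1/2}{n}\left(\frac{\hbar}{m_0c}\right)^{2n+2}\frac{\partial^{2n+2}Y}{\partial x^{2n+2}} $$ for all $x,t\in\mathbb{R}$ (the series on the right converging), and $Y(x,0)=\sum_{n\geq1,\,nl_0<1}f_ne^{-nx}$.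
   Context: $\binom{-1/2}{n}=\frac{(-1/2)(-3/2)\cdots(-1/2-n+1)}{n!}$ denotes the generalized binomial coefficient. The quantity $l_0$ is called the Compton wavelength of the particle. *)

theory Defs
  imports "HOL-Analysis.Analysis"
begin

definition xderiv :: "(real \<Rightarrow> complex) \<Rightarrow> real \<Rightarrow> complex" where
  "xderiv g = (\<lambda>x. vector_derivative g (at x))"

end

theory Submission
  imports Defs
begin

text \<open>Every mode \<open>e\<^sup>i\<^sup>\<omega>\<^sup>t e\<^sup>\<lambda>\<^sup>x\<close> of a finite superposition is an eigenfunction of both sides of
  the equation: \<open>i\<hbar>\<partial>\<^sub>t\<close> acts as \<open>-\<hbar>\<omega>\<close>, and the series of even \<open>x\<close>-derivatives acts as its
  symbol \<open>\<Sum>\<^sub>k c\<^sub>k \<lambda>\<^sup>2\<^sup>k\<^sup>+\<^sup>2\<close>. For \<open>\<lambda> = -n\<close> and \<open>q = (n l\<^sub>0)\<^sup>2 < 1\<close> the binomial series sums the symbol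
  to \<open>-q/\<surd>(1-q)\<close>, and the chosen frequencies are exactly the ones satisfying the resulting
  dispersion relation \<open>-\<hbar>\<omega> = E\<^sub>0 - E\<^sub>0 q/(2\<surd>(1-q))\<close>.\<close>

lemma has_vector_derivative_exp_i_times:
  "((\<lambda>t::real. exp (\<i> * complex_of_real (b * t))) has_vector_derivative
      \<i> * complex_of_real b * exp (\<i> * complex_of_real (b * t))) (at t)"
proof -
  have "((\<lambda>z. exp (\<i> * complex_of_real b * z)) has_field_derivative
      exp (\<i> * complex_of_real b * of_real t) * (\<i> * complex_of_real b)) (at (of_real t))"
    by (auto intro!: derivative_eq_intros)
  from has_vector_derivative_real_field[OF this, of UNIV]
  show ?thesis by (simp add: mult_ac)
qed

lemma sums_minus_half_binomial:
  fixes q :: real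
  assumes "\<bar>q\<bar> < 1"
  shows "(\<lambda>k. (-1)^(k+1) * ((-1/2) gchoose k) * q^(k+1)) sums (- q / sqrt (1 - q))"
proof -
  have "\<bar>-q\<bar> < 1" using assms by simp
  from sums_mult[OF gen_binomial_real[OF this, of "-1/2"], of "-q"]
  have "(\<lambda>k. - q * (((-1/2) gchoose k) * (-q)^k)) sums (- q * (1 + - q) powr (-1/2))" .
  also have "(\<lambda>k. - q * (((-1/2) gchoose k) * (-q)^k))
      = (\<lambda>k. (-1)^(k+1) * ((-1/2) gchoose k) * q^(k+1))"
  proof
    fix k
    have "(-q)^k = (-1)^k * q^k" by (rule power_minus)
    then show "- q * (((-1/2) gchoose k) * (-q)^k) = (-1)^(k+1) * ((-1/2) gchoose k) * q^(k+1)"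
      by (simp only: power_Suc Suc_eq_plus1[symmetric]) (simp add: mult_ac)
  qed
  also have "- q * (1 + - q) powr (-1/2) = - q / sqrt (1 - q)"
    using assms by (simp add: powr_minus_divide powr_half_sqrt)
  finally show ?thesis .
qed

lemma sums_minus_half_binomial_even_powers:
  fixes l y :: real
  assumes "(l * y)^2 < 1"
  shows "(\<lambda>k. (-1)^(k+1) * ((-1/2) gchoose k) * l^(2*k+2) * y^(2*k+2))
           sums (- ((l * y)^2) / sqrt (1 - (l * y)^2))"
proof -
  have "l^(2*k+2) * y^(2*k+2) = ((l * y)^2)^(k+1)" for k
  proof -
    have "2*k+2 = 2*(k+1)" by simp
    then show ?thesis by (simp only: power_mult) (simp add: power_mult_distrib)
  qed
  then have series_eq: "(\<lambda>k. (-1)^(k+1) * ((-1/2) gchoose k) * l^(2*k+2) * y^(2*k+2))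
      = (\<lambda>k. (-1)^(k+1) * ((-1/2) gchoose k) * ((l * y)^2)^(k+1))"
    by (simp only: mult.assoc)
  have "\<bar>(l * y)^2\<bar> < 1" using assms by simp
  from sums_minus_half_binomial[OF this] show ?thesis unfolding series_eq .
qed

lemma relativistic_dispersion_relation:
  fixes hbar E q :: real
  assumes "hbar > 0" and "q < 1"
  shows "- (hbar * (E * q / (2 * hbar * sqrt \<bar>q - 1\<bar>) - E / hbar)) = E + E/2 * (- q / sqrt (1 - q))"
proof -
  have "\<bar>q - 1\<bar> = 1 - q" "sqrt (1 - q) > 0" using assms(2) by simp_all
  then show ?thesis using assms(1) by (simp add: field_simps)
qed

definition exp_sum ::
    "'a set \<Rightarrow> ('a \<Rightarrow> complex) \<Rightarrow> ('a \<Rightarrow> real) \<Rightarrow> nat \<Rightarrow> real \<Rightarrow> complex" where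
  "exp_sum N a lam k x = (\<Sum>j\<in>N. a j * complex_of_real (lam j ^ k * exp (lam j * x)))"

lemma has_vector_derivative_exp_sum:
  "(exp_sum N a lam k has_vector_derivative exp_sum N a lam (Suc k) x) (at x)"
  unfolding exp_sum_def
  by (intro has_vector_derivative_sum has_vector_derivative_mult_right has_vector_derivative_of_real)
     (auto intro!: derivative_eq_intros)

lemma xderiv_exp_sum: "xderiv (exp_sum N a lam k) = exp_sum N a lam (Suc k)"
  unfolding xderiv_def using has_vector_derivative_exp_sum by (auto intro!: ext vector_derivative_at)

lemma funpow_xderiv_exp_sum: "(xderiv ^^ k) (exp_sum N a lam 0) = exp_sum N a lam k"
  by (induction k) (simp_all add: xderiv_exp_sum)

lemma sums_exp_sum_series:
  assumes "\<And>j. j \<in> N \<Longrightarrow> (\<lambda>k. coef k * lam j ^ d k) sums s j"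
  shows "(\<lambda>k. complex_of_real (coef k) * exp_sum N a lam (d k) x)
           sums (\<Sum>j\<in>N. a j * complex_of_real (exp (lam j * x)) * complex_of_real (s j))"
proof -
  have "(\<lambda>k. \<Sum>j\<in>N. a j * complex_of_real (exp (lam j * x)) * complex_of_real (coef k * lam j ^ d k))
          sums (\<Sum>j\<in>N. a j * complex_of_real (exp (lam j * x)) * complex_of_real (s j))"
    by (intro sums_sum sums_mult sums_of_real assms)
  then show ?thesis by (simp add: exp_sum_def sum_distrib_left mult_ac)
qed

definition wave_sum ::
    "'a set \<Rightarrow> ('a \<Rightarrow> complex) \<Rightarrow> ('a \<Rightarrow> real) \<Rightarrow> ('a \<Rightarrow> real) \<Rightarrow> real \<Rightarrow> real \<Rightarrow> complex" where
  "wave_sum N a omega lam x t =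
     (\<Sum>j\<in>N. a j * exp (\<i> * complex_of_real (omega j * t)) * complex_of_real (exp (lam j * x)))"

lemma wave_sum_eq_exp_sum:
  "(\<lambda>x. wave_sum N a omega lam x t) = exp_sum N (\<lambda>j. a j * exp (\<i> * complex_of_real (omega j * t))) lam 0"
  by (simp add: fun_eq_iff wave_sum_def exp_sum_def)

lemma has_vector_derivative_wave_sum_time:
  "((\<lambda>t. wave_sum N a omega lam x t) has_vector_derivative
      (\<Sum>j\<in>N. \<i> * complex_of_real (omega j) *
          (a j * exp (\<i> * complex_of_real (omega j * t)) * complex_of_real (exp (lam j * x))))) (at t)"
proof -
  have "((\<lambda>t. \<Sum>j\<in>N. (a j * complex_of_real (exp (lam j * x))) * exp (\<i> * complex_of_real (omega j * t)))
         has_vector_derivative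
         (\<Sum>j\<in>N. (a j * complex_of_real (exp (lam j * x))) *
            (\<i> * complex_of_real (omega j) * exp (\<i> * complex_of_real (omega j * t))))) (at t)"
    by (intro has_vector_derivative_sum has_vector_derivative_mult_right has_vector_derivative_exp_i_times)
  then show ?thesis by (simp add: wave_sum_def mult_ac)
qed

lemma wave_sum_global_phase:
  "exp (- \<i> * complex_of_real (b * t)) * wave_sum N a omega lam x t
     = wave_sum N a (\<lambda>j. omega j - b) lam x t"
proof -
  have "exp (- \<i> * complex_of_real (b * t)) * exp (\<i> * complex_of_real (omega j * t))
      = exp (\<i> * complex_of_real ((omega j - b) * t))" for j
    by (simp add: algebra_simps flip: exp_add)
  then have term_eq: "exp (- \<i> * complex_of_real (b * t)) * (a j * exp (\<i> * complex_of_real (omega j * t)) * e)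
      = a j * exp (\<i> * complex_of_real ((omega j - b) * t)) * e" for j e
    by (metis mult.assoc mult.left_commute)
  then show ?thesis unfolding wave_sum_def sum_distrib_left by (intro sum.cong refl term_eq)
qed

lemma wave_sum_time_vector_derivative_works:
  "((\<lambda>t. wave_sum N a omega lam x t) has_vector_derivative
      vector_derivative (\<lambda>t. wave_sum N a omega lam x t) (at t)) (at t)"
  using has_vector_derivative_wave_sum_time
  by (rule vector_derivative_works[THEN iffD1, OF differentiableI_vector])

lemma wave_sum_has_higher_space_derivatives:
  "((xderiv ^^ k) (\<lambda>x. wave_sum N a omega lam x t) has_vector_derivative
      (xderiv ^^ Suc k) (\<lambda>x. wave_sum N a omega lam x t) x) (at x)"
  unfolding wave_sum_eq_exp_sum funpow_xderiv_exp_sum by (rule has_vector_derivative_exp_sum)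

lemma wave_sum_solves_dispersive_equation:
  fixes N :: "'a set" and a :: "'a \<Rightarrow> complex" and omega lam s :: "'a \<Rightarrow> real"
    and coef :: "nat \<Rightarrow> real" and hbar E :: real
  assumes symbol: "\<And>j. j \<in> N \<Longrightarrow> (\<lambda>k. coef k * lam j ^ (2*k+2)) sums s j"
    and dispersion: "\<And>j. j \<in> N \<Longrightarrow> - (hbar * omega j) = E + E/2 * s j"
  defines "Y \<equiv> wave_sum N a omega lam"
  shows "\<exists>S. (\<lambda>k. complex_of_real (coef k) * (xderiv ^^ (2*k+2)) (\<lambda>x'. Y x' t) x) sums S
             \<and> \<i> * complex_of_real hbar * vector_derivative (\<lambda>t'. Y x t') (at t)
                 = complex_of_real E * Y x t + complex_of_real (E/2) * S"
proof (intro exI conjI)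
  define mode where
    "mode j = a j * exp (\<i> * complex_of_real (omega j * t)) * complex_of_real (exp (lam j * x))" for j
  show "(\<lambda>k. complex_of_real (coef k) * (xderiv ^^ (2*k+2)) (\<lambda>x'. Y x' t) x)
          sums (\<Sum>j\<in>N. mode j * complex_of_real (s j))"
    unfolding Y_def mode_def wave_sum_eq_exp_sum funpow_xderiv_exp_sum
    using sums_exp_sum_series[OF symbol] by simp
  have "\<i> * complex_of_real hbar * (\<i> * complex_of_real (omega j) * mode j)
          = complex_of_real E * mode j + complex_of_real (E/2) * (mode j * complex_of_real (s j))"
    if "j \<in> N" for j
  proof -
    have "\<i> * complex_of_real hbar * (\<i> * complex_of_real (omega j) * mode j)
            = complex_of_real (- (hbar * omega j)) * mode j"
      by (simp add: algebra_simps)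
    also have "\<dots> = complex_of_real (E + E/2 * s j) * mode j"
      using dispersion[OF that] by simp
    finally show ?thesis by (simp add: algebra_simps)
  qed
  then show "\<i> * complex_of_real hbar * vector_derivative (\<lambda>t'. Y x t') (at t)
               = complex_of_real E * Y x t + complex_of_real (E/2) * (\<Sum>j\<in>N. mode j * complex_of_real (s j))"
    unfolding Y_def vector_derivative_at[OF has_vector_derivative_wave_sum_time]
    by (simp add: wave_sum_def mode_def sum_distrib_left sum.distrib[symmetric] cong: sum.cong)
qed

theorem theorem2:
  fixes hbar m0 c E0 l0 :: real and f :: "nat \<Rightarrow> complex"
    and Y :: "real \<Rightarrow> real \<Rightarrow> complex"
  assumes hbar_pos: "hbar > 0" and m0_pos: "m0 > 0" and c_pos: "c > 0"
  defines "E0 \<equiv> m0 * c^2"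
    and "l0 \<equiv> hbar / (m0 * c)"
  defines "Y \<equiv> (\<lambda>x t. exp (- \<i> * complex_of_real (E0 * t / hbar)) *
      (\<Sum>n\<in>{n::nat. n \<ge> 1 \<and> real n * l0 < 1}.
         f n * exp (\<i> * complex_of_real (E0 * l0^2 * (real n)^2 * t /
                    (2 * hbar * sqrt \<bar>l0^2 * (real n)^2 - 1\<bar>)))
             * complex_of_real (exp (- real n * x))))"
  shows "(\<forall>x t. ((\<lambda>t'. Y x t') has_vector_derivative
                     (vector_derivative (\<lambda>t'. Y x t') (at t))) (at t))
       \<and> (\<forall>t x k. ((xderiv ^^ k) (\<lambda>x'. Y x' t) has_vector_derivative
                     (xderiv ^^ Suc k) (\<lambda>x'. Y x' t) x) (at x))
       \<and> (\<forall>x t. \<exists>S. (\<lambda>k. complex_of_real ((-1)^(k+1) * ((-1/2) gchoose k) * (hbar/(m0*c))^(2*k+2))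
                         * (xderiv ^^ (2*k+2)) (\<lambda>x'. Y x' t) x) sums S
                 \<and> \<i> * complex_of_real hbar * vector_derivative (\<lambda>t'. Y x t') (at t)
                     = complex_of_real E0 * Y x t + complex_of_real (E0/2) * S)
       \<and> (\<forall>x. Y x 0 = (\<Sum>n\<in>{n::nat. n \<ge> 1 \<and> real n * l0 < 1}.
                          f n * complex_of_real (exp (- real n * x))))"
proof -
  define N where "N = {n::nat. n \<ge> 1 \<and> real n * l0 < 1}"
  define lam :: "nat \<Rightarrow> real" where "lam n = - real n" for n
  define q where "q n = (l0 * real n)^2" for n
  define omega where "omega n = E0 * q n / (2 * hbar * sqrt \<bar>q n - 1\<bar>)" for n
  define s where "s n = - q n / sqrt (1 - q n)" for n
  have "Y x t = exp (- \<i> * complex_of_real (E0 / hbar * t)) * wave_sum N f omega lam x t" for x t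
    by (simp add: Y_def wave_sum_def N_def lam_def omega_def q_def power_mult_distrib mult_ac)
  then have Y_eq: "Y = wave_sum N f (\<lambda>n. omega n - E0 / hbar) lam"
    by (simp only: fun_eq_iff simp_thms flip: wave_sum_global_phase)
  have q_less_1: "q n < 1" if "n \<in> N" for n
    using that hbar_pos m0_pos c_pos abs_square_less_1[of "l0 * real n"]
    by (auto simp: N_def q_def l0_def mult_ac)
  have symbol:
    "(\<lambda>k. (-1)^(k+1) * ((-1/2) gchoose k) * (hbar/(m0*c))^(2*k+2) * lam n ^ (2*k+2)) sums s n"
    if "n \<in> N" for n
  proof -
    have q_eq: "(hbar/(m0*c) * lam n)^2 = q n" by (simp add: q_def lam_def l0_def)
    then have "(hbar/(m0*c) * lam n)^2 < 1" using q_less_1[OF that] by simp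
    from sums_minus_half_binomial_even_powers[OF this] show ?thesis unfolding q_eq s_def .
  qed
  have dispersion: "- (hbar * (omega n - E0 / hbar)) = E0 + E0/2 * s n" if "n \<in> N" for n
    unfolding omega_def s_def using hbar_pos q_less_1[OF that] by (rule relativistic_dispersion_relation)
  have initial: "Y x 0 = (\<Sum>n\<in>{n::nat. n \<ge> 1 \<and> real n * l0 < 1}.
                          f n * complex_of_real (exp (- real n * x)))" for x
    by (simp add: Y_def)
  show ?thesis
    unfolding Y_eq
    by (intro conjI allI wave_sum_time_vector_derivative_works wave_sum_has_higher_space_derivatives
        wave_sum_solves_dispersive_equation[where N = N and a = f and lam = lam, OF symbol dispersion]
        initial[unfolded Y_eq])
qed

end
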